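(* Let $h$ be the state on $U_n^{nc}$ defined below. For all $r$ (even) and all $1\le i_1,j_1,\dots,i_r,j_r\le n$, $$h(u_{i_1j_1}u^*_{i_2j_2}u_{i_3j_3}u^*_{i_4j_4}\cdots u_{i_{r-1}j_{r-1}}u^*_{i_rj_r})=\tfrac1n\,\delta_{i_1i_2}\delta_{j_2j_3}\delta_{i_3i_4}\cdots\delta_{i_{r-1}i_r}\delta_{j_rj_1},$$ $$h(u^*_{i_1j_1}u_{i_2j_2}u^*_{i_3j_3}u_{i_4j_4}\cdots u^*_{i_{r-1}j_{r-1}}u_{i_rj_r})=\tfrac1n\,\delta_{j_1j_2}\delta_{i_2i_3}\delta_{j_3j_4}\cdots\delta_{j_{r-1}j_r}\delta_{i_ri_1}.$$
   Context: $U_n^{nc}$ is the universal unital $*$-algebra generated by $u_{ij}$ ($1\le i,j\le n$) with $\sum_ku_{ki}^*u_{kj}=\delta_{ij}=\sum_ku_{ik}u_{jk}^*$. Let $H=\ell^2(\mathbb Z)\otimes\bigotimes_{k\in\mathbb Z}M_n(\mathbb C)$, where $M_n(\mathbb C)$ is a Hilbert space with inner product $\langle A,B\rangle=\mathrm{Tr}(A^*B)/n$ and the infinite tensor product is taken with respect to the reference vector $I_n$ (only finitely many factors differ from $I_n$); $(\delta_k)$ is the standard basis of $\ell^2(\mathbb Z)$ and $E_{ij}$ the matrix units. Define bounded operators $U_{ij}$ on $H$ by $U_{ij}(\delta_k\otimes(\cdots\otimes M_{k-1}\otimes M_k\otimes M_{k+1}\otimes\cdots))=\delta_{k+1}\otimes(\cdots\otimes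 M_{k-1}\otimes E_{ji}M_k\otimes M_{k+1}\otimes\cdots)$ (the factor at position $k$ is multiplied), so that $U_{ij}^*(\delta_k\otimes(\cdots\otimes M_{k-1}\otimes\cdots))=\delta_{k-1}\otimes(\cdots\otimes E_{ij}M_{k-1}\otimes M_k\otimes\cdots)$. These satisfy the defining relations of $U_n^{nc}$, so there is a unital $*$-homomorphism $j:U_n^{nc}\to B(H)$, $j(u_{ij})=U_{ij}$. With $\Omega=\delta_0\otimes\bigotimes_kI_n$, define $h(a)=\langle\Omega,j(a)\Omega\rangle$. *)

theory Defs
  imports Complex_Main "Jordan_Normal_Form.Matrix"
begin

text \<open>Generators of U_n^nc and their adjoints: a letter (s, i, j) stands for
  u_ij if s = False and for u_ij^* if s = True (indices 1..n).
  A monomial is a list of letters, read left to right as a product.\<close>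
type_synonym letter = "bool \<times> nat \<times> nat"

definition matunit :: "nat \<Rightarrow> nat \<Rightarrow> nat \<Rightarrow> complex mat" where
  "matunit n i j = mat n n (\<lambda>(a, b). if a = i - 1 \<and> b = j - 1 then 1 else 0)"

definition mat_inner :: "nat \<Rightarrow> complex mat \<Rightarrow> complex mat \<Rightarrow> complex" where
  "mat_inner n A B = (\<Sum>a<n. \<Sum>b<n. cnj (A $$ (a, b)) * B $$ (a, b)) / of_nat n"

text \<open>Elementary tensors delta_k (x) (x)_l M_l of H, with M_l = I_n for all but
  finitely many l.\<close>
type_synonym etensor = "int \<times> (int \<Rightarrow> complex mat)"

definition Omega :: "nat \<Rightarrow> etensor" where
  "Omega n = (0, \<lambda>_. 1\<^sub>m n)"

text \<open>Inner product of elementary tensors (only finitely many factors differ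
  from I_n, and <I_n, I_n> = 1).\<close>
definition etensor_inner :: "nat \<Rightarrow> etensor \<Rightarrow> etensor \<Rightarrow> complex" where
  "etensor_inner n x y =
     (if fst x = fst y
      then (\<Prod>l\<in>{l. snd x l \<noteq> 1\<^sub>m n \<or> snd y l \<noteq> 1\<^sub>m n}. mat_inner n (snd x l) (snd y l))
      else 0)"

fun act :: "nat \<Rightarrow> letter \<Rightarrow> etensor \<Rightarrow> etensor" where
  "act n (False, i, j) (k, M) = (k + 1, M(k := matunit n j i * M k))"
| "act n (True, i, j) (k, M) = (k - 1, M(k - 1 := matunit n i j * M (k - 1)))"

text \<open>j(w) Omega for a monomial w = x_1 x_2 ... x_r (x_r acts first).\<close>
definition apply_word :: "nat \<Rightarrow> letter list \<Rightarrow> etensor \<Rightarrow> etensor" where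
  "apply_word n w v = foldr (act n) w v"

definition hstate :: "nat \<Rightarrow> letter list \<Rightarrow> complex" where
  "hstate n w = etensor_inner n (Omega n) (apply_word n w (Omega n))"

definition kd :: "nat \<Rightarrow> nat \<Rightarrow> complex" where
  "kd a b = (if a = b then 1 else 0)"

end

theory Submission
  imports Defs
begin

text \<open>Each generator shifts the \<open>\<ell>\<^sup>2(\<int>)\<close> coordinate by \<open>\<plusminus>1\<close> and multiplies one tensor
  factor on the left by a matrix unit. In an alternating word the two letters of each
  consecutive pair undo each other's shift, so all matrix units pile up on a single
  tensor factor (position \<open>-1\<close> for \<open>u u\<^sup>* \<dots>\<close>, position \<open>0\<close> for \<open>u\<^sup>* u \<dots>\<close>). Their product
  telescopes by \<open>E\<^sub>a\<^sub>b E\<^sub>c\<^sub>d = \<delta>\<^sub>b\<^sub>c E\<^sub>a\<^sub>d\<close> to a product of Kronecker deltas times a single matrix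
  unit, and pairing with \<open>\<Omega>\<close> picks out its normalised trace.\<close>

lemma kd_commute: "kd a b = kd b a"
  by (simp add: kd_def)

lemma matunit_carrier [simp]: "matunit n a b \<in> carrier_mat n n"
  by (simp add: matunit_def)

lemma matunit_mult_matunit:
  assumes "1 \<le> b" "b \<le> n" "1 \<le> c" "c \<le> n"
  shows "matunit n a b * matunit n c d = kd b c \<cdot>\<^sub>m matunit n a d"
proof (rule eq_matI)
  fix x y assume "x < dim_row (kd b c \<cdot>\<^sub>m matunit n a d)" "y < dim_col (kd b c \<cdot>\<^sub>m matunit n a d)"
  hence x: "x < n" and y: "y < n" by (auto simp: matunit_def)
  have "(matunit n a b * matunit n c d) $$ (x, y)
      = (\<Sum>k<n. (if x = a - 1 \<and> k = b - 1 then 1 else 0) * (if k = c - 1 \<and> y = d - 1 then 1 else 0))"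
    using x y by (simp add: matunit_def index_mult_mat scalar_prod_def atLeast0LessThan)
  also have "\<dots> = (\<Sum>k<n. if k = b - 1 then (if x = a - 1 \<and> b = c \<and> y = d - 1 then 1 else 0) else 0)"
    using assms by (intro sum.cong) auto
  also have "\<dots> = (kd b c \<cdot>\<^sub>m matunit n a d) $$ (x, y)"
    using x y assms by (simp add: matunit_def kd_def)
  finally show "(matunit n a b * matunit n c d) $$ (x, y) = (kd b c \<cdot>\<^sub>m matunit n a d) $$ (x, y)" .
qed (auto simp: matunit_def)

lemma smult_smult_mat: "x \<cdot>\<^sub>m (y \<cdot>\<^sub>m A) = (x * y) \<cdot>\<^sub>m (A :: 'a :: semigroup_mult mat)"
  by (rule eq_matI) (auto simp: mult.assoc)

lemma smult_mult_smult_mat: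
  assumes "A \<in> carrier_mat n n" "B \<in> carrier_mat n n"
  shows "(x \<cdot>\<^sub>m A) * (y \<cdot>\<^sub>m B) = (x * y) \<cdot>\<^sub>m (A * (B :: 'a :: comm_semiring_0 mat))"
  using assms
  by (simp add: mult_smult_assoc_mat[of _ n n _ n] mult_smult_distrib[of _ n n _ n] smult_smult_mat
      mult.commute)

definition zigzag :: "nat \<Rightarrow> (nat \<Rightarrow> nat) \<Rightarrow> (nat \<Rightarrow> nat) \<Rightarrow> nat \<Rightarrow> complex mat" where
  "zigzag n i j a = matunit n (j a) (i a) * matunit n (i (Suc a)) (j (Suc a))"

lemma zigzag_carrier [simp]: "zigzag n i j a \<in> carrier_mat n n"
  by (simp add: zigzag_def mult_carrier_mat[of _ n n])

lemma zigzag_eq: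
  assumes "1 \<le> i a" "i a \<le> n" "1 \<le> i (Suc a)" "i (Suc a) \<le> n"
  shows "zigzag n i j a = kd (i a) (i (Suc a)) \<cdot>\<^sub>m matunit n (j a) (j (Suc a))"
  using assms by (simp add: zigzag_def matunit_mult_matunit)

fun step2_prod :: "nat \<Rightarrow> (nat \<Rightarrow> 'a :: semiring_1 mat) \<Rightarrow> nat \<Rightarrow> nat \<Rightarrow> 'a mat" where
  "step2_prod n P a 0 = 1\<^sub>m n"
| "step2_prod n P a (Suc m) = P a * step2_prod n P (a + 2) m"

lemma step2_prod_carrier:
  "(\<And>b. P b \<in> carrier_mat n n) \<Longrightarrow> step2_prod n P a m \<in> carrier_mat n n"
  by (induction m arbitrary: a) (auto intro: mult_carrier_mat)

lemma step2_prod_zigzag: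
  assumes "odd a" "1 \<le> m"
    and "\<And>l. l \<in> {a..<a+2*m} \<Longrightarrow> 1 \<le> i l \<and> i l \<le> n \<and> 1 \<le> j l \<and> j l \<le> n"
  shows "step2_prod n (zigzag n i j) a m
       = (\<Prod>l\<in>{a..<a+2*m-1}. if odd l then kd (i l) (i (Suc l)) else kd (j l) (j (Suc l)))
           \<cdot>\<^sub>m matunit n (j a) (j (a+2*m-1))"
  using assms
proof (induction m arbitrary: a)
  case 0
  then show ?case by simp
next
  case (Suc m)
  define f where "f = (\<lambda>l. if odd l then kd (i l) (i (Suc l)) else kd (j l) (j (Suc l)))"
  have Z: "zigzag n i j a = f a \<cdot>\<^sub>m matunit n (j a) (j (Suc a))"
    using Suc.prems by (simp add: f_def zigzag_eq)
  show ?case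
  proof (cases "m = 0")
    case True
    then show ?thesis
      using Z by (simp add: f_def right_mult_one_mat[of _ n n])
  next
    case False
    have IH: "step2_prod n (zigzag n i j) (a+2) m
        = (\<Prod>l\<in>{a+2..<a+2+2*m-1}. f l) \<cdot>\<^sub>m matunit n (j (a+2)) (j (a+2+2*m-1))"
      using Suc.IH[of "a+2"] Suc.prems False by (auto simp: f_def)
    have ja: "1 \<le> j (Suc a)" "j (Suc a) \<le> n" "1 \<le> j (a+2)" "j (a+2) \<le> n"
      using Suc.prems(3)[of "Suc a"] Suc.prems(3)[of "a+2"] False by auto
    have "{a..<a+2*Suc m-1} = insert a (insert (Suc a) {a+2..<a+2+2*m-1})"
      using False by auto
    then have prod: "(\<Prod>l\<in>{a..<a+2*Suc m-1}. f l) = f a * (f (Suc a) * (\<Prod>l\<in>{a+2..<a+2+2*m-1}. f l))"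
      by simp
    have "f (Suc a) = kd (j (Suc a)) (j (a+2))"
      using \<open>odd a\<close> by (simp add: f_def)
    have "step2_prod n (zigzag n i j) a (Suc m) = zigzag n i j a * step2_prod n (zigzag n i j) (a+2) m"
      by simp
    also have "\<dots> = (f a \<cdot>\<^sub>m matunit n (j a) (j (Suc a)))
        * ((\<Prod>l\<in>{a+2..<a+2+2*m-1}. f l) \<cdot>\<^sub>m matunit n (j (a+2)) (j (a+2+2*m-1)))"
      by (simp only: Z IH)
    also have "\<dots> = (f a * (\<Prod>l\<in>{a+2..<a+2+2*m-1}. f l))
        \<cdot>\<^sub>m (matunit n (j a) (j (Suc a)) * matunit n (j (a+2)) (j (a+2+2*m-1)))"
      by (rule smult_mult_smult_mat[of _ n]) auto
    also have "\<dots> = (\<Prod>l\<in>{a..<a+2*Suc m-1}. f l) \<cdot>\<^sub>m matunit n (j a) (j (a+2*Suc m-1))"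
      unfolding prod using ja \<open>f (Suc a) = _\<close> False
      by (simp add: matunit_mult_matunit smult_smult_mat ac_simps)
    finally show ?thesis unfolding f_def .
  qed
qed

lemma apply_word_pairs:
  fixes w :: "nat \<Rightarrow> letter"
  assumes "odd a" and P: "\<And>b. P b \<in> carrier_mat n n"
    and pair: "\<And>b M. odd b \<Longrightarrow> \<forall>l. M l \<in> carrier_mat n n \<Longrightarrow>
                 act n (w b) (act n (w (Suc b)) (k, M)) = (k, M(p := P b * M p))"
    and "\<forall>l. M l \<in> carrier_mat n n"
  shows "apply_word n (map w [a..<a+2*m]) (k, M) = (k, M(p := step2_prod n P a m * M p))"
  using assms(1,4)
proof (induction m arbitrary: a M)
  case 0
  then show ?case
    by (auto simp: apply_word_def fun_eq_iff intro!: left_mult_one_mat[symmetric])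
next
  case (Suc m)
  define S where "S = step2_prod n P (a+2) m"
  have S: "S \<in> carrier_mat n n"
    unfolding S_def using P by (rule step2_prod_carrier)
  have IH: "apply_word n (map w [a+2..<a+2+2*m]) (k, M) = (k, M(p := S * M p))"
    using Suc.IH[of "a+2" M] Suc.prems by (simp del: upt_Suc add: S_def fun_upd_def)
  have "map w [a..<a+2*Suc m] = w a # w (Suc a) # map w [a+2..<a+2+2*m]"
    by (simp add: upt_rec)
  then have "apply_word n (map w [a..<a+2*Suc m]) (k, M)
      = act n (w a) (act n (w (Suc a)) (apply_word n (map w [a+2..<a+2+2*m]) (k, M)))"
    by (simp only: apply_word_def foldr_Cons o_apply)
  also have "\<dots> = act n (w a) (act n (w (Suc a)) (k, M(p := S * M p)))"
    by (simp only: IH)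
  also have "\<dots> = (k, M(p := P a * (S * M p)))"
    using pair[of a "M(p := S * M p)"] Suc.prems S by simp
  also have "P a * (S * M p) = step2_prod n P a (Suc m) * M p"
    using Suc.prems S P[of a] by (simp add: S_def assoc_mult_mat[of _ n n _ n _ n])
  finally show ?case .
qed

lemma act_u_adj_pair:
  assumes "\<forall>l. M l \<in> carrier_mat n n"
  shows "act n (False, i b, j b) (act n (True, i (Suc b), j (Suc b)) (k, M))
       = (k, M(k - 1 := zigzag n i j b * M (k - 1)))"
  using assms by (simp add: zigzag_def assoc_mult_mat[of _ n n _ n _ n])

lemma act_adj_u_pair:
  assumes "\<forall>l. M l \<in> carrier_mat n n"
  shows "act n (True, i b, j b) (act n (False, i (Suc b), j (Suc b)) (k, M))
       = (k, M(k := zigzag n j i b * M k))"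
  using assms by (simp add: zigzag_def assoc_mult_mat[of _ n n _ n _ n])

lemma mat_inner_one_left:
  assumes "A \<in> carrier_mat n n"
  shows "mat_inner n (1\<^sub>m n) A = (\<Sum>a<n. A $$ (a, a)) / of_nat n"
proof -
  have "(\<Sum>b<n. cnj (1\<^sub>m n $$ (a, b)) * A $$ (a, b)) = A $$ (a, a)" if "a < n" for a
  proof -
    have "(\<Sum>b<n. cnj (1\<^sub>m n $$ (a, b)) * A $$ (a, b)) = (\<Sum>b<n. if b = a then A $$ (a, a) else 0)"
      using that by (intro sum.cong) auto
    then show ?thesis using that by simp
  qed
  then show ?thesis by (simp add: mat_inner_def)
qed

lemma mat_inner_one_one: "1 \<le> n \<Longrightarrow> mat_inner n (1\<^sub>m n) (1\<^sub>m n) = 1"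
  by (simp add: mat_inner_one_left)

lemma mat_inner_one_smult_matunit:
  assumes "1 \<le> x" "x \<le> n" "1 \<le> y" "y \<le> n"
  shows "mat_inner n (1\<^sub>m n) (c \<cdot>\<^sub>m matunit n x y) = c * kd x y / of_nat n"
proof -
  have "(\<Sum>a<n. (c \<cdot>\<^sub>m matunit n x y) $$ (a, a)) = (\<Sum>a<n. if a = x - 1 then c * kd x y else 0)"
    using assms by (intro sum.cong) (auto simp: matunit_def kd_def)
  also have "\<dots> = c * kd x y"
    using assms by simp
  finally show ?thesis
    by (simp add: mat_inner_one_left[of _ n])
qed

lemma etensor_inner_Omega_update:
  assumes "1 \<le> n"
  shows "etensor_inner n (Omega n) (0, (\<lambda>_. 1\<^sub>m n)(p := X)) = mat_inner n (1\<^sub>m n) X"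
proof (cases "X = 1\<^sub>m n")
  case True
  then show ?thesis using assms by (simp add: etensor_inner_def Omega_def mat_inner_one_one)
next
  case False
  then have "{l. 1\<^sub>m n \<noteq> (1\<^sub>m n :: complex mat) \<or> ((\<lambda>_. 1\<^sub>m n)(p := X)) l \<noteq> 1\<^sub>m n} = {p}"
    by auto
  then show ?thesis by (simp add: etensor_inner_def Omega_def)
qed

lemma hstate_u_adj_word:
  assumes "1 \<le> n"
  shows "hstate n (map (\<lambda>l. (even l, i l, j l)) [1..<1+2*m])
       = mat_inner n (1\<^sub>m n) (step2_prod n (zigzag n i j) 1 m)"
proof -
  have "apply_word n (map (\<lambda>l. (even l, i l, j l)) [1..<1+2*m]) (0, \<lambda>_. 1\<^sub>m n)
      = (0, (\<lambda>_. 1\<^sub>m n)(- 1 := step2_prod n (zigzag n i j) 1 m * 1\<^sub>m n))"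
    by (rule apply_word_pairs) (simp_all add: act_u_adj_pair del: act.simps)
  then show ?thesis
    using assms step2_prod_carrier[of "zigzag n i j" n 1 m]
    by (simp add: hstate_def Omega_def etensor_inner_Omega_update[unfolded Omega_def])
qed

lemma hstate_adj_u_word:
  assumes "1 \<le> n"
  shows "hstate n (map (\<lambda>l. (odd l, i l, j l)) [1..<1+2*m])
       = mat_inner n (1\<^sub>m n) (step2_prod n (zigzag n j i) 1 m)"
proof -
  have "apply_word n (map (\<lambda>l. (odd l, i l, j l)) [1..<1+2*m]) (0, \<lambda>_. 1\<^sub>m n)
      = (0, (\<lambda>_. 1\<^sub>m n)(0 := step2_prod n (zigzag n j i) 1 m * 1\<^sub>m n))"
    by (rule apply_word_pairs) (simp_all add: act_adj_u_pair del: act.simps)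
  then show ?thesis
    using assms step2_prod_carrier[of "zigzag n j i" n 1 m]
    by (simp add: hstate_def Omega_def etensor_inner_Omega_update[unfolded Omega_def])
qed

lemma mat_inner_one_step2_prod_zigzag:
  assumes "1 \<le> m" "\<And>l. l \<in> {1..2*m} \<Longrightarrow> 1 \<le> i l \<and> i l \<le> n \<and> 1 \<le> j l \<and> j l \<le> n"
  shows "mat_inner n (1\<^sub>m n) (step2_prod n (zigzag n i j) 1 m)
       = (1 / of_nat n) * (\<Prod>l\<in>{1..<2*m}. if odd l then kd (i l) (i (Suc l)) else kd (j l) (j (Suc l)))
           * kd (j (2*m)) (j 1)"
proof -
  have "step2_prod n (zigzag n i j) 1 m
      = (\<Prod>l\<in>{1..<2*m}. if odd l then kd (i l) (i (Suc l)) else kd (j l) (j (Suc l)))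
          \<cdot>\<^sub>m matunit n (j 1) (j (2*m))"
    using step2_prod_zigzag[of 1 m] assms by auto
  moreover have "1 \<le> j 1" "j 1 \<le> n" "1 \<le> j (2*m)" "j (2*m) \<le> n"
    using assms(2)[of 1] assms(2)[of "2*m"] assms(1) by auto
  ultimately show ?thesis
    by (simp add: mat_inner_one_smult_matunit kd_commute[of "j (2*m)"])
qed

theorem mainTheorem8:
  fixes n r :: nat and i j :: "nat \<Rightarrow> nat"
  assumes "even r" and "r \<ge> 2"
    and "\<And>l. l \<in> {1..r} \<Longrightarrow> 1 \<le> i l \<and> i l \<le> n \<and> 1 \<le> j l \<and> j l \<le> n"
  shows "hstate n (map (\<lambda>l. (even l, i l, j l)) [1..<r+1])
           = (1 / of_nat n) * (\<Prod>l\<in>{1..<r}. if odd l then kd (i l) (i (Suc l)) else kd (j l) (j (Suc l)))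
               * kd (j r) (j 1)
       \<and> hstate n (map (\<lambda>l. (odd l, i l, j l)) [1..<r+1])
           = (1 / of_nat n) * (\<Prod>l\<in>{1..<r}. if odd l then kd (j l) (j (Suc l)) else kd (i l) (i (Suc l)))
               * kd (i r) (i 1)"
proof -
  obtain m where r: "r = 2 * m"
    using assms(1) by blast
  have m: "1 \<le> m" and n: "1 \<le> n"
    using assms(2) assms(3)[of 1] r by auto
  have "[1..<r+1] = [1..<1+2*m]"
    using r by simp
  moreover have "\<And>l. l \<in> {1..2*m} \<Longrightarrow> 1 \<le> j l \<and> j l \<le> n \<and> 1 \<le> i l \<and> i l \<le> n"
    using assms(3) r by auto
  ultimately show ?thesis
    using assms(3) r
    by (simp only: hstate_u_adj_word[OF n] hstate_adj_u_word[OF n]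
        mat_inner_one_step2_prod_zigzag[OF m])
qed

end
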